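(* Let $W$ be the group of a reflection lattice, with a chosen set $\{r_i\}_{i\in I}$ of simple reflections. Let $\mathbf{i}=i_1i_2\cdots i_m$ be a minimal word, $\sigma\in W$ a reflection, and $n$ the number of times $\sigma$ appears in the sequence of reflections associated to $\mathbf{i}$. Suppose that $\sigma$ is a simple reflection, that $r(\mathbf{i})$ is a reflection which commutes with $\sigma$, and that $r(\mathbf{i})\neq\sigma$. Then $n=0$.
   Context: A reflection lattice is a free abelian group $L$ of finite rank with a finite subgroup $W\subset\mathrm{Aut}(L)$ generated by the reflections (automorphisms conjugate in $GL(r,\mathbb{Q})$ to $\mathrm{diag}(-1,1,\dots,1)$) it contains; $W$ is a finite Weyl group and a set of simple reflections $\{r_i\}_{i\in I}$ is a Coxeter generating set of reflections in the walls of a chamber. Let $\mathbf{I}$ be the free group on $I$ and $r:\mathbf{I}\to W$ the homomorphism with $r(i)=r_i$. A word is positive if it is a product of elements of $I$; its length is the number of factors. A positive word $\mathbf{i}$ is minimal if no positive word of smaller length has the same image under $r$. For a positive word $\mathbf{i}=i_1\cdots i_m$, the associated sequence of reflections is $\sigma_1,\dots,\sigma_m$ with $\sigma_k=r(i_1\cdots i_{k-1})\,r_{i_k}\,r(i_1\cdots i_{k-1})^{-1}$. *)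

theory Defs
  imports "HOL-Analysis.Analysis"
begin

text \<open>The lattice L is identified with the integer points of real^'n (rank = CARD('n));
automorphisms of L are integer matrices with integer inverse.\<close>

definition int_mat :: "real^'n^'n \<Rightarrow> bool" where
  "int_mat A \<longleftrightarrow> (\<forall>i j. A $ i $ j \<in> \<int>)"

definition rat_mat :: "real^'n^'n \<Rightarrow> bool" where
  "rat_mat A \<longleftrightarrow> (\<forall>i j. A $ i $ j \<in> \<rat>)"

definition lattice_aut :: "real^'n^'n \<Rightarrow> bool" where
  "lattice_aut A \<longleftrightarrow> int_mat A \<and> invertible A \<and> int_mat (matrix_inv A)"

definition refl_diag :: "'n \<Rightarrow> real^'n^'n" where
  "refl_diag k = (\<chi> i j. if i = j then (if i = k then -1 else 1) else 0)"

definition is_reflection :: "real^'n^'n \<Rightarrow> bool" where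
  "is_reflection s \<longleftrightarrow> (\<exists>P k. rat_mat P \<and> rat_mat (matrix_inv P) \<and> invertible P \<and>
       s = P ** refl_diag k ** matrix_inv P)"

inductive_set gen_by :: "(real^'n^'n) set \<Rightarrow> (real^'n^'n) set" for S where
  gen_one: "mat 1 \<in> gen_by S"
| gen_step: "s \<in> S \<Longrightarrow> x \<in> gen_by S \<Longrightarrow> s ** x \<in> gen_by S"

definition reflection_group :: "(real^'n^'n) set \<Rightarrow> bool" where
  "reflection_group W \<longleftrightarrow> finite W \<and> (\<forall>A\<in>W. lattice_aut A) \<and> mat 1 \<in> W \<and>
     (\<forall>A\<in>W. \<forall>B\<in>W. A ** B \<in> W) \<and> (\<forall>A\<in>W. matrix_inv A \<in> W) \<and>
     W = gen_by {s\<in>W. is_reflection s}"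

definition refl_hyperplane :: "real^'n^'n \<Rightarrow> (real^'n) set" where
  "refl_hyperplane s = {x. s *v x = x}"

definition hyperplane_complement :: "(real^'n^'n) set \<Rightarrow> (real^'n) set" where
  "hyperplane_complement W = UNIV - (\<Union>s\<in>{s\<in>W. is_reflection s}. refl_hyperplane s)"

definition is_chamber :: "(real^'n^'n) set \<Rightarrow> (real^'n) set \<Rightarrow> bool" where
  "is_chamber W C \<longleftrightarrow> (\<exists>x\<in>hyperplane_complement W.
      C = connected_component_set (hyperplane_complement W) x)"

definition is_wall_reflection :: "(real^'n) set \<Rightarrow> real^'n^'n \<Rightarrow> bool" where
  "is_wall_reflection C s \<longleftrightarrow> (\<exists>x\<in>refl_hyperplane s. \<exists>e>0.
      ball x e \<inter> refl_hyperplane s \<subseteq> closure C)"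

definition simple_reflections ::
  "(real^'n^'n) set \<Rightarrow> 'i set \<Rightarrow> ('i \<Rightarrow> real^'n^'n) \<Rightarrow> bool" where
  "simple_reflections W I r \<longleftrightarrow> (\<exists>C. is_chamber W C \<and> inj_on r I \<and>
      r ` I = {s\<in>W. is_reflection s \<and> is_wall_reflection C s})"

fun word_eval :: "('i \<Rightarrow> real^'n^'n) \<Rightarrow> 'i list \<Rightarrow> real^'n^'n" where
  "word_eval r [] = mat 1"
| "word_eval r (i # w) = r i ** word_eval r w"

definition minimal_word :: "'i set \<Rightarrow> ('i \<Rightarrow> real^'n^'n) \<Rightarrow> 'i list \<Rightarrow> bool" where
  "minimal_word I r w \<longleftrightarrow> set w \<subseteq> I \<and>
     (\<forall>v. set v \<subseteq> I \<and> word_eval r v = word_eval r w \<longrightarrow> length w \<le> length v)"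

text \<open>k-th reflection of the associated sequence (0-indexed: k = 0..m-1 corresponds to
 sigma_(k+1) = r(i_1...i_k) r_(i_(k+1)) r(i_1...i_k)^(-1)).\<close>
definition refl_seq :: "('i \<Rightarrow> real^'n^'n) \<Rightarrow> 'i list \<Rightarrow> nat \<Rightarrow> real^'n^'n" where
  "refl_seq r w k = word_eval r (take k w) ** r (w ! k) ** matrix_inv (word_eval r (take k w))"

definition occurrences :: "('i \<Rightarrow> real^'n^'n) \<Rightarrow> 'i list \<Rightarrow> real^'n^'n \<Rightarrow> nat" where
  "occurrences r w \<sigma> = card {k. k < length w \<and> refl_seq r w k = \<sigma>}"

end

theory Submission
  imports Defs
begin

text \<open>Write \<sigma> x = x - 2 (a \<bullet> x) v, pick x0 in the chamber C and put u_j = r(i_1 ... i_j).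
  Consecutive points u_j x0 and u_(j+1) x0 lie in the chambers u_j C and u_j r_(i_(j+1)) C, which
  are separated only by the hyperplane of the j-th reflection of the sequence; so the sign of
  a \<bullet> (u_j x0) changes exactly at the steps where that reflection is \<sigma>. A reflection commuting
  with \<sigma> and different from it preserves the form a, hence the number n of sign changes along
  the whole word is even. Minimality of the word makes the reflections of the sequence pairwise
  distinct, so n \<le> 1 and therefore n = 0.\<close>

lemma matrix_inv_right:
  fixes A :: "'a::semiring_1^'n^'m"
  assumes "invertible A"
  shows "A ** matrix_inv A = mat 1"
  using someI_ex[OF assms[unfolded invertible_def]] unfolding matrix_inv_def by blast

lemma matrix_inv_left:
  fixes A :: "'a::semiring_1^'n^'m"
  assumes "invertible A"
  shows "matrix_inv A ** A = mat 1"
  using someI_ex[OF assms[unfolded invertible_def]] unfolding matrix_inv_def by blast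

lemma matrix_inv_unique:
  fixes A B :: "'a::field^'n^'n"
  assumes "A ** B = mat 1"
  shows "matrix_inv A = B"
proof -
  have "B ** A = mat 1" using assms matrix_left_right_inverse by blast
  then have "invertible A" using assms unfolding invertible_def by blast
  have "matrix_inv A = matrix_inv A ** (A ** B)" using assms by simp
  also have "\<dots> = B" using matrix_inv_left[OF \<open>invertible A\<close>] by (simp add: matrix_mul_assoc)
  finally show ?thesis .
qed

lemma matrix_inv_mult:
  fixes A B :: "'a::field^'n^'n"
  assumes "invertible A" "invertible B"
  shows "matrix_inv (A ** B) = matrix_inv B ** matrix_inv A"
proof (rule matrix_inv_unique)
  have "A ** B ** (matrix_inv B ** matrix_inv A) = A ** (B ** matrix_inv B) ** matrix_inv A"
    by (simp add: matrix_mul_assoc)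
  then show "A ** B ** (matrix_inv B ** matrix_inv A) = mat 1"
    using assms by (simp add: matrix_inv_right)
qed

lemma matrix_inv_matrix_inv:
  fixes A :: "'a::field^'n^'n"
  assumes "invertible A"
  shows "matrix_inv (matrix_inv A) = A"
  using matrix_inv_left[OF assms] by (rule matrix_inv_unique)

definition reflection_along :: "real^'n \<Rightarrow> real^'n \<Rightarrow> real^'n^'n \<Rightarrow> bool" where
  "reflection_along a v s \<longleftrightarrow> a \<bullet> v = 1 \<and> (\<forall>x. s *v x = x - (2 * (a \<bullet> x)) *\<^sub>R v)"

lemma refl_diag_apply: "refl_diag k *v y = y - (2 * y $ k) *\<^sub>R axis k 1"
proof -
  have "(refl_diag k *v y) $ i = (if i = k then -1 else 1) * y $ i" for i
  proof -
    have "(refl_diag k *v y) $ i = (\<Sum>j\<in>UNIV. if j = i then (if i = k then -1 else 1) * y $ j else 0)"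
      unfolding refl_diag_def matrix_vector_mult_def vec_lambda_beta by (intro sum.cong) auto
    then show ?thesis by simp
  qed
  then show ?thesis by (simp add: vec_eq_iff axis_def)
qed

lemma is_reflection_along:
  fixes s :: "real^'n^'n"
  assumes "is_reflection s"
  obtains a v where "reflection_along a v s"
proof -
  obtain P :: "real^'n^'n" and k where P: "invertible P" "s = P ** refl_diag k ** matrix_inv P"
    using assms unfolding is_reflection_def by blast
  define Q where "Q = matrix_inv P"
  have PQ: "P ** Q = mat 1" "Q ** P = mat 1"
    using P(1) by (simp_all add: Q_def matrix_inv_left matrix_inv_right)
  have PQx: "P *v (Q *v x) = x" for x by (simp add: matrix_vector_mul_assoc PQ)
  define v where "v = P *v axis k 1"
  have "Q $ k \<bullet> v = 1"
    by (simp add: v_def matrix_vector_mul_component[symmetric] matrix_vector_mul_assoc PQ axis_def)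
  moreover have "s *v x = x - (2 * (Q $ k \<bullet> x)) *\<^sub>R v" for x
  proof -
    have "s *v x = P *v (refl_diag k *v (Q *v x))"
      by (simp add: P(2) Q_def matrix_vector_mul_assoc matrix_mul_assoc)
    also have "\<dots> = x - (2 * (Q $ k \<bullet> x)) *\<^sub>R v"
      by (simp add: refl_diag_apply matrix_vector_mult_diff_distrib matrix_vector_mult_scaleR
          matrix_vector_mul_assoc[symmetric] PQ PQx v_def matrix_vector_mul_component)
    finally show ?thesis .
  qed
  ultimately show ?thesis using that unfolding reflection_along_def by blast
qed

lemma reflection_along_fixes_iff:
  assumes "reflection_along a v s"
  shows "s *v y = y \<longleftrightarrow> a \<bullet> y = 0"
proof
  assume "s *v y = y"
  then have "a \<bullet> (s *v y) = a \<bullet> y" by simp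
  then show "a \<bullet> y = 0" using assms by (simp add: reflection_along_def inner_diff_right)
qed (use assms in \<open>simp add: reflection_along_def\<close>)

lemma reflection_along_involution:
  assumes "reflection_along a v s"
  shows "s ** s = mat 1"
proof -
  have "(s ** s) *v x = mat 1 *v x" for x
    using assms unfolding reflection_along_def
    by (simp add: matrix_vector_mul_assoc[symmetric] inner_diff_right scaleR_diff_left)
  then show ?thesis using matrix_eq by blast
qed

lemma is_reflection_involution: "is_reflection s \<Longrightarrow> s ** s = mat 1"
  by (metis is_reflection_along reflection_along_involution)

lemma reflection_along_inner_apply:
  "reflection_along a v s \<Longrightarrow> a \<bullet> (s *v y) = - (a \<bullet> y)"
  by (simp add: reflection_along_def inner_diff_right)

lemma reflection_along_neg_eigenvector:
  assumes "reflection_along a v s" and "s *v y = - y"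
  shows "y = (a \<bullet> y) *\<^sub>R v"
proof -
  have "y - (2 * (a \<bullet> y)) *\<^sub>R v = - y" using assms unfolding reflection_along_def by metis
  then have "2 *\<^sub>R y = 2 *\<^sub>R ((a \<bullet> y) *\<^sub>R v)" by (simp add: algebra_simps scaleR_2)
  then show ?thesis by (metis scaleR_cancel_left zero_neq_numeral)
qed

lemma inner_factors_through_kernel:
  fixes a b v x :: "'a::real_inner"
  assumes "a \<bullet> v = 1" and "\<forall>y. a \<bullet> y = 0 \<longrightarrow> b \<bullet> y = 0"
  shows "b \<bullet> x = (a \<bullet> x) * (b \<bullet> v)"
proof -
  have "a \<bullet> (x - (a \<bullet> x) *\<^sub>R v) = 0" using assms(1) by (simp add: inner_diff_right)
  then have "b \<bullet> (x - (a \<bullet> x) *\<^sub>R v) = 0" using assms(2) by blast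
  then show ?thesis by (simp add: inner_diff_right)
qed

lemma reflection_along_eqI:
  assumes s: "reflection_along a v s" and t: "reflection_along b w t"
    and "\<forall>y. a \<bullet> y = 0 \<longrightarrow> b \<bullet> y = 0" and v: "v = c *\<^sub>R w"
  shows "s = t"
proof -
  have "b \<bullet> x = c * (a \<bullet> x)" for x
    using inner_factors_through_kernel[of a v b x] assms unfolding reflection_along_def by simp
  then have "s *v x = t *v x" for x using s t v unfolding reflection_along_def by simp
  then show ?thesis using matrix_eq by blast
qed

lemma finite_matrix_monoid_powers_repeat:
  fixes A :: "'a::semiring_1^'n^'n"
  assumes "finite W" "mat 1 \<in> W" "\<forall>A\<in>W. \<forall>B\<in>W. A ** B \<in> W" "A \<in> W"
  obtains p q where "p \<noteq> q" "(((**) A) ^^ p) (mat 1) = (((**) A) ^^ q) (mat 1)"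
proof -
  define M where "M k = (((**) A) ^^ k) (mat 1)" for k
  have "M k \<in> W" for k using assms by (induction k) (simp_all add: M_def)
  then have "range M \<subseteq> W" by blast
  then have "\<not> inj M" using assms(1) finite_subset infinite_UNIV_nat finite_imageD by blast
  then show ?thesis using that unfolding inj_def M_def by blast
qed

lemma transvection_power_apply:
  fixes T :: "real^'n^'n"
  assumes "\<And>x. T *v x = x + (b \<bullet> x) *\<^sub>R n" and "b \<bullet> n = 0"
  shows "(((**) T) ^^ k) (mat 1) *v x = x + (real k * (b \<bullet> x)) *\<^sub>R n"
proof (induction k)
  case 0
  then show ?case by simp
next
  case (Suc k)
  have "(((**) T) ^^ Suc k) (mat 1) *v x = T *v ((((**) T) ^^ k) (mat 1) *v x)"
    by (simp add: matrix_vector_mul_assoc)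
  also have "\<dots> = x + (real (Suc k) * (b \<bullet> x)) *\<^sub>R n"
    unfolding assms(1) Suc by (simp add: inner_add_right assms(2) algebra_simps)
  finally show ?case .
qed

text \<open>If the hyperplane of \<tau> lies in that of \<sigma>, then \<sigma>\<tau> is a transvection
  x \<mapsto> x + (b \<bullet> x) n with b \<bullet> n = 0; it has finite order only if n = 0.\<close>
lemma reflection_eq_if_fixes_subset:
  fixes \<sigma> \<tau> :: "real^'n^'n"
  assumes W: "finite W" "mat 1 \<in> W" "\<forall>A\<in>W. \<forall>B\<in>W. A ** B \<in> W"
    and in_W: "\<sigma> \<in> W" "\<tau> \<in> W"
    and \<sigma>: "reflection_along a v \<sigma>" and \<tau>: "reflection_along b w \<tau>"
    and fix_sub: "\<And>y. \<tau> *v y = y \<Longrightarrow> \<sigma> *v y = y"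
  shows "\<sigma> = \<tau>"
proof -
  have ker: "\<forall>y. b \<bullet> y = 0 \<longrightarrow> a \<bullet> y = 0"
    using fix_sub reflection_along_fixes_iff[OF \<sigma>] reflection_along_fixes_iff[OF \<tau>] by blast
  define c where "c = a \<bullet> w"
  have a_eq: "a \<bullet> x = (b \<bullet> x) * c" for x
    using inner_factors_through_kernel[of b w a x] \<tau> ker by (simp add: reflection_along_def c_def)
  define n where "n = 2 *\<^sub>R (c *\<^sub>R v - w)"
  have bn: "b \<bullet> n = 0"
    using a_eq[of v] \<sigma> \<tau> by (simp add: reflection_along_def n_def inner_diff_right algebra_simps)
  have transvection: "(\<sigma> ** \<tau>) *v x = x + (b \<bullet> x) *\<^sub>R n" for x
  proof -
    have \<sigma>x: "\<sigma> *v y = y - (2 * (a \<bullet> y)) *\<^sub>R v" for y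
      using \<sigma> by (simp add: reflection_along_def)
    have \<tau>x: "\<tau> *v x = x - (2 * (b \<bullet> x)) *\<^sub>R w"
      using \<tau> by (simp add: reflection_along_def)
    have a\<tau>x: "a \<bullet> (\<tau> *v x) = - ((b \<bullet> x) * c)"
      using \<tau> unfolding \<tau>x by (simp add: reflection_along_def inner_diff_right a_eq)
    have "(\<sigma> ** \<tau>) *v x = \<tau> *v x + (2 * ((b \<bullet> x) * c)) *\<^sub>R v"
      unfolding matrix_vector_mul_assoc[symmetric] \<sigma>x a\<tau>x by simp
    also have "\<dots> = x + (b \<bullet> x) *\<^sub>R n"
      unfolding \<tau>x by (simp add: n_def scaleR_diff_right algebra_simps)
    finally show ?thesis .
  qed
  obtain p q where "p \<noteq> q" "(((**) (\<sigma> ** \<tau>)) ^^ p) (mat 1) = (((**) (\<sigma> ** \<tau>)) ^^ q) (mat 1)"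
    using finite_matrix_monoid_powers_repeat[OF W] W(3) in_W by blast
  then have "real p *\<^sub>R n = real q *\<^sub>R n"
    using transvection_power_apply[OF transvection bn, of _ w] \<tau>
    by (metis add_left_cancel mult.right_neutral reflection_along_def)
  then have "w = c *\<^sub>R v" using \<open>p \<noteq> q\<close> by (simp add: n_def)
  then show ?thesis using reflection_along_eqI[OF \<tau> \<sigma> ker] by metis
qed

lemma commuting_reflection_preserves_functional:
  fixes \<sigma> t :: "real^'n^'n"
  assumes \<sigma>: "reflection_along a v \<sigma>" and t: "is_reflection t"
    and comm: "t ** \<sigma> = \<sigma> ** t" and "t \<noteq> \<sigma>"
  shows "a \<bullet> (t *v x) = a \<bullet> x"
proof -
  obtain b w where tbw: "reflection_along b w t" using is_reflection_along[OF t] .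
  have \<sigma>x: "\<sigma> *v y = y - (2 * (a \<bullet> y)) *\<^sub>R v" and tx: "t *v y = y - (2 * (b \<bullet> y)) *\<^sub>R w" for y
    using \<sigma> tbw by (simp_all add: reflection_along_def)
  have comm_apply: "t *v (\<sigma> *v y) = \<sigma> *v (t *v y)" for y
    by (simp add: matrix_vector_mul_assoc comm)
  have "a \<bullet> w = 0"
  proof (rule ccontr)
    assume aw: "a \<bullet> w \<noteq> 0"
    \<comment> \<open>then commutation forces t to have the hyperplane and the (-1)-eigenline of \<sigma>\<close>
    have "b \<bullet> y = 0" if "a \<bullet> y = 0" for y
    proof -
      have "\<sigma> *v y = y" using that reflection_along_fixes_iff[OF \<sigma>] by blast
      then have "\<sigma> *v (t *v y) = t *v y" using comm_apply[of y] by simp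
      then have "a \<bullet> (t *v y) = 0" using reflection_along_fixes_iff[OF \<sigma>] by blast
      then show ?thesis using that aw by (simp add: tx inner_diff_right)
    qed
    moreover obtain c where "v = c *\<^sub>R w"
    proof -
      have "t *v w = - w" using tbw by (simp add: tx reflection_along_def scaleR_2)
      then have "t *v (\<sigma> *v w) = - (\<sigma> *v w)"
        by (simp add: comm_apply linear_neg[OF matrix_vector_mul_linear])
      then have "\<sigma> *v w = (b \<bullet> (\<sigma> *v w)) *\<^sub>R w" by (rule reflection_along_neg_eigenvector[OF tbw])
      then have "(2 * (a \<bullet> w)) *\<^sub>R v = (1 - b \<bullet> (\<sigma> *v w)) *\<^sub>R w"
        unfolding \<sigma>x by (simp add: algebra_simps)
      then have "v = ((1 - b \<bullet> (\<sigma> *v w)) / (2 * (a \<bullet> w))) *\<^sub>R w"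
        using aw by (simp add: eq_vector_fraction_iff)
      then show ?thesis by (rule that)
    qed
    ultimately have "\<sigma> = t" using reflection_along_eqI[OF \<sigma> tbw] by blast
    then show False using \<open>t \<noteq> \<sigma>\<close> by simp
  qed
  then show ?thesis by (simp add: tx inner_diff_right)
qed

lemma rat_mat_mult:
  assumes "rat_mat A" "rat_mat B"
  shows "rat_mat (A ** B)"
  using assms unfolding rat_mat_def matrix_matrix_mult_def by (auto intro!: Rats_sum Rats_mult)

lemma int_mat_imp_rat_mat: "int_mat A \<Longrightarrow> rat_mat A"
  unfolding int_mat_def rat_mat_def using Ints_subset_Rats by blast

lemma is_reflection_conj:
  fixes g s :: "real^'n^'n"
  assumes g: "lattice_aut g" and s: "is_reflection s"
  shows "is_reflection (g ** s ** matrix_inv g)"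
proof -
  obtain P :: "real^'n^'n" and k where P: "rat_mat P" "rat_mat (matrix_inv P)" "invertible P"
    "s = P ** refl_diag k ** matrix_inv P"
    using s unfolding is_reflection_def by blast
  have g': "rat_mat g" "rat_mat (matrix_inv g)" "invertible g"
    using g int_mat_imp_rat_mat unfolding lattice_aut_def by auto
  have inv: "matrix_inv (g ** P) = matrix_inv P ** matrix_inv g"
    using matrix_inv_mult[OF g'(3) P(3)] .
  have "g ** s ** matrix_inv g = (g ** P) ** refl_diag k ** matrix_inv (g ** P)"
    unfolding inv P(4) by (simp add: matrix_mul_assoc)
  moreover have "rat_mat (g ** P)" "rat_mat (matrix_inv (g ** P))" "invertible (g ** P)"
    using rat_mat_mult g' P invertible_mult unfolding inv by auto
  ultimately show ?thesis unfolding is_reflection_def by blast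
qed

lemma reflection_groupD:
  assumes "reflection_group W"
  shows "finite W" "mat 1 \<in> W" "\<forall>A\<in>W. \<forall>B\<in>W. A ** B \<in> W"
    and "A \<in> W \<Longrightarrow> matrix_inv A \<in> W" "A \<in> W \<Longrightarrow> lattice_aut A" "A \<in> W \<Longrightarrow> invertible A"
  using assms unfolding reflection_group_def lattice_aut_def by auto

lemma reflection_group_conj_reflection:
  assumes W: "reflection_group W" and "g \<in> W" "s \<in> W" "is_reflection s"
  shows "g ** s ** matrix_inv g \<in> W" "is_reflection (g ** s ** matrix_inv g)"
  using assms reflection_groupD[OF W] is_reflection_conj[of g s] by auto

lemma hyperplane_complement_invariant:
  assumes W: "reflection_group W" and x: "x \<in> hyperplane_complement W" and g: "g \<in> W"
  shows "g *v x \<in> hyperplane_complement W"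
proof -
  have "s *v (g *v x) \<noteq> g *v x" if s: "s \<in> W" "is_reflection s" for s
  proof
    assume fix_gx: "s *v (g *v x) = g *v x"
    have g_inv: "invertible g" "matrix_inv g \<in> W" using g reflection_groupD[OF W] by auto
    define t where "t = matrix_inv g ** s ** matrix_inv (matrix_inv g)"
    have "t \<in> W" "is_reflection t"
      using reflection_group_conj_reflection[OF W g_inv(2) s] unfolding t_def by auto
    moreover have "t *v x = x"
    proof -
      have "t *v x = matrix_inv g *v (s *v (g *v x))"
        by (simp add: t_def matrix_inv_matrix_inv[OF g_inv(1)] matrix_vector_mul_assoc matrix_mul_assoc)
      also have "\<dots> = (matrix_inv g ** g) *v x" unfolding fix_gx by (rule matrix_vector_mul_assoc)
      finally show ?thesis by (simp add: matrix_inv_left[OF g_inv(1)])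
    qed
    ultimately show False using x unfolding hyperplane_complement_def refl_hyperplane_def by blast
  qed
  then show ?thesis unfolding hyperplane_complement_def refl_hyperplane_def by blast
qed

lemma hyperplane_complement_functional_nonzero:
  assumes "x \<in> hyperplane_complement W" "\<sigma> \<in> W" "is_reflection \<sigma>" "reflection_along a v \<sigma>"
  shows "a \<bullet> x \<noteq> 0"
  using assms reflection_along_fixes_iff[OF assms(4)]
  unfolding hyperplane_complement_def refl_hyperplane_def by blast

lemma connected_nonvanishing_sign_eq:
  fixes f :: "'a::topological_space \<Rightarrow> real"
  assumes "connected S" "continuous_on S f" "\<forall>x\<in>S. f x \<noteq> 0" "x \<in> S" "y \<in> S"
  shows "f x > 0 \<longleftrightarrow> f y > 0"
proof -
  have "connected (f ` S)" using assms(1,2) connected_continuous_image by blast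
  show ?thesis
  proof (rule ccontr)
    assume "\<not> ?thesis"
    then have "min (f x) (f y) \<le> 0" "0 \<le> max (f x) (f y)" by auto
    moreover have "min (f x) (f y) \<in> f ` S" "max (f x) (f y) \<in> f ` S"
      using assms(4,5) by (auto simp: min_def max_def)
    ultimately have "0 \<in> f ` S"
      using \<open>connected (f ` S)\<close> unfolding connected_iff_interval by blast
    then show False using assms(3) by auto
  qed
qed

lemma linear_vanishes_on_subspace_if_vanishes_near:
  fixes f :: "'a::real_normed_vector \<Rightarrow> real"
  assumes f: "linear f" and H: "subspace H" "p \<in> H" "z \<in> H"
    and e: "e > 0" "\<forall>y\<in>ball p e \<inter> H. f y = 0"
  shows "f z = 0"
proof (cases "z = 0")
  case True
  then show ?thesis using linear_0[OF f] by simp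
next
  case False
  define d where "d = e / (2 * norm z)"
  have "d > 0" using e False by (simp add: d_def)
  have "p + d *\<^sub>R z \<in> ball p e \<inter> H"
    using e False H by (simp add: d_def dist_norm subspace_add subspace_scale)
  then have "f p + d * f z = 0"
    using e(2) linear_add[OF f] linear_scale[OF f] by (metis real_scaleR_def)
  moreover have "f p = 0" using e H by simp
  ultimately show ?thesis using \<open>d > 0\<close> by simp
qed

lemma subspace_refl_hyperplane: "subspace (refl_hyperplane s)"
  unfolding subspace_def refl_hyperplane_def
  by (simp add: matrix_vector_right_distrib matrix_vector_mult_scaleR)

lemma wall_separating_functional_vanishes:
  fixes f :: "real^'n \<Rightarrow> real" and s :: "real^'n^'n"
  assumes f: "linear f" and C: "connected C" "x0 \<in> C"
    and nonzero: "\<forall>x\<in>C. f x \<noteq> 0 \<and> f (s *v x) \<noteq> 0"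
    and wall: "is_wall_reflection C s"
    and separates: "\<not> (f x0 > 0 \<longleftrightarrow> f (s *v x0) > 0)"
    and z: "s *v z = z"
  shows "f z = 0"
proof -
  have cont: "continuous_on A h" if "linear h" for A and h :: "real^'n \<Rightarrow> real"
    using that linear_continuous_on linear_conv_bounded_linear by blast
  define g where "g x = f x * f (s *v x)" for x
  have g_cont: "continuous_on A g" for A
    unfolding g_def
    by (intro continuous_on_mult cont f linear_compose[OF matrix_vector_mul_linear, unfolded o_def])
  have "g x0 < 0" using separates nonzero C(2) unfolding g_def
    by (metis linorder_neqE_linordered_idom mult_neg_pos mult_pos_neg)
  moreover have g_nonzero: "\<forall>x\<in>C. g x \<noteq> 0" using nonzero by (simp add: g_def)
  ultimately have "g x < 0" if "x \<in> C" for x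
    using connected_nonvanishing_sign_eq[OF C(1) g_cont g_nonzero C(2) that] g_nonzero that
    by (metis linorder_neqE_linordered_idom order.asym)
  then have "closure C \<subseteq> {x. g x \<le> 0}"
    by (intro closure_minimal closed_Collect_le g_cont continuous_on_const) (auto intro: less_imp_le)
  obtain p e where pe: "p \<in> refl_hyperplane s" "e > 0" "ball p e \<inter> refl_hyperplane s \<subseteq> closure C"
    using wall unfolding is_wall_reflection_def by blast
  have "f y = 0" if "y \<in> ball p e \<inter> refl_hyperplane s" for y
  proof -
    have "g y \<le> 0" using that pe(3) \<open>closure C \<subseteq> _\<close> by blast
    moreover have "s *v y = y" using that unfolding refl_hyperplane_def by blast
    ultimately have "f y * f y \<le> 0" unfolding g_def by simp
    then show ?thesis by (metis mult_le_0_iff order_antisym)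
  qed
  then show ?thesis
    using linear_vanishes_on_subspace_if_vanishes_near[OF f subspace_refl_hyperplane pe(1) _ pe(2)] z
    unfolding refl_hyperplane_def by blast
qed

lemma wall_crossing_preserves_side:
  fixes u s \<sigma> :: "real^'n^'n"
  assumes W: "reflection_group W"
    and C: "connected C" "C \<subseteq> hyperplane_complement W" "x0 \<in> C"
    and s: "s \<in> W" "is_reflection s" "is_wall_reflection C s"
    and u: "u \<in> W"
    and \<sigma>: "\<sigma> \<in> W" "is_reflection \<sigma>" "reflection_along a v \<sigma>"
    and ne: "u ** s ** matrix_inv u \<noteq> \<sigma>"
  shows "a \<bullet> (u *v x0) > 0 \<longleftrightarrow> a \<bullet> ((u ** s) *v x0) > 0"
proof (rule ccontr)
  assume separates: "\<not> ?thesis"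
  define f where "f x = a \<bullet> (u *v x)" for x
  have "linear f"
    unfolding f_def linear_iff by (simp add: matrix_vector_right_distrib matrix_vector_mult_scaleR inner_add_right)
  have us: "u ** s \<in> W" using u s(1) reflection_groupD(3)[OF W] by blast
  have "\<forall>x\<in>C. f x \<noteq> 0 \<and> f (s *v x) \<noteq> 0"
    using hyperplane_complement_invariant[OF W _ u] hyperplane_complement_invariant[OF W _ us]
      hyperplane_complement_functional_nonzero[OF _ \<sigma>] C(2)
    by (auto simp: f_def matrix_vector_mul_assoc)
  then have f_vanishes: "f z = 0" if "s *v z = z" for z
    using wall_separating_functional_vanishes[OF \<open>linear f\<close> C(1,3) _ s(3) _ that] separates
    by (simp add: f_def matrix_vector_mul_assoc)
  define \<tau> where "\<tau> = u ** s ** matrix_inv u"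
  have \<tau>: "\<tau> \<in> W" "is_reflection \<tau>"
    using reflection_group_conj_reflection[OF W u s(1,2)] unfolding \<tau>_def by auto
  obtain b w where \<tau>_along: "reflection_along b w \<tau>" using is_reflection_along[OF \<tau>(2)] .
  have u_inv: "u ** matrix_inv u = mat 1" "matrix_inv u ** u = mat 1"
    using reflection_groupD(6)[OF W u] matrix_inv_right matrix_inv_left by blast+
  have "\<sigma> *v y = y" if "\<tau> *v y = y" for y
  proof -
    have "s *v (matrix_inv u *v y) = matrix_inv u *v (\<tau> *v y)"
      by (simp add: \<tau>_def matrix_vector_mul_assoc matrix_mul_assoc u_inv)
    then have "f (matrix_inv u *v y) = 0" using that f_vanishes by simp
    then have "a \<bullet> y = 0" by (simp add: f_def matrix_vector_mul_assoc u_inv)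
    then show ?thesis using reflection_along_fixes_iff[OF \<sigma>(3)] by blast
  qed
  then have "\<sigma> = \<tau>"
    using reflection_eq_if_fixes_subset[OF reflection_groupD(1-3)[OF W] \<sigma>(1) \<tau>(1) \<sigma>(3) \<tau>_along]
    by blast
  then show False using ne unfolding \<tau>_def by simp
qed

lemma word_eval_append: "word_eval r (xs @ ys) = word_eval r xs ** word_eval r ys"
  by (induction xs) (auto simp: matrix_mul_assoc)

lemma word_eval_take_Suc:
  "j < length w \<Longrightarrow> word_eval r (take (Suc j) w) = word_eval r (take j w) ** r (w ! j)"
  by (simp add: take_Suc_conv_app_nth word_eval_append)

lemma invertible_word_eval:
  assumes "\<forall>i\<in>set w. r i ** r i = mat 1"
  shows "invertible (word_eval r w)"
  using assms
proof (induction w)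
  case Nil
  then show ?case unfolding invertible_def by (intro exI[of _ "mat 1"]) simp
next
  case (Cons i w)
  then have "invertible (r i)" unfolding invertible_def by auto
  then show ?case using Cons by (simp add: invertible_mult)
qed

lemma refl_seq_mult_prefix:
  assumes "\<forall>i\<in>set w. r i ** r i = mat 1" and "j < length w"
  shows "refl_seq r w j ** word_eval r (take j w) = word_eval r (take (Suc j) w)"
proof -
  define U where "U = word_eval r (take j w)"
  have "invertible U"
    using assms(1) invertible_word_eval[of "take j w" r] in_set_takeD unfolding U_def by metis
  have "refl_seq r w j ** U = U ** r (w ! j) ** (matrix_inv U ** U)"
    unfolding refl_seq_def U_def[symmetric] by (simp add: matrix_mul_assoc)
  then show ?thesis
    unfolding word_eval_take_Suc[OF assms(2)] U_def[symmetric]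
    using matrix_inv_left[OF \<open>invertible U\<close>] by simp
qed

lemma refl_seq_mult_prefix_Suc:
  assumes "\<forall>i\<in>set w. r i ** r i = mat 1" and "j < length w"
  shows "refl_seq r w j ** word_eval r (take (Suc j) w) = word_eval r (take j w)"
proof -
  have "refl_seq r w j ** word_eval r (take (Suc j) w)
      = (refl_seq r w j ** word_eval r (take j w)) ** r (w ! j)"
    unfolding word_eval_take_Suc[OF assms(2)] by (simp add: matrix_mul_assoc)
  also have "\<dots> = word_eval r (take j w) ** (r (w ! j) ** r (w ! j))"
    unfolding refl_seq_mult_prefix[OF assms] word_eval_take_Suc[OF assms(2)]
    by (simp add: matrix_mul_assoc)
  finally show ?thesis using assms by simp
qed

text \<open>If the k-th and l-th reflections coincide, deleting the letters k and l does not
  change r(w).\<close>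
lemma minimal_word_refl_seq_distinct:
  assumes involutive: "\<forall>i\<in>I. r i ** r i = mat 1" and mw: "minimal_word I r w"
    and kl: "k < l" "l < length w"
  shows "refl_seq r w k \<noteq> refl_seq r w l"
proof
  assume eq: "refl_seq r w k = refl_seq r w l"
  have w: "set w \<subseteq> I" using mw unfolding minimal_word_def by blast
  then have inv_w: "\<forall>i\<in>set w. r i ** r i = mat 1" using involutive by blast
  define B where "B = word_eval r (drop (Suc k) (take l w))"
  define D where "D = word_eval r (drop (Suc l) w)"
  have "take l w = take (Suc k) w @ drop (Suc k) (take l w)"
    using kl by (metis append_take_drop_id min.absorb1 Suc_leI take_take)
  then have prefix_l: "word_eval r (take l w) = word_eval r (take (Suc k) w) ** B"
    unfolding B_def by (metis word_eval_append)
  have "word_eval r w = word_eval r (take (Suc l) w) ** D"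
    unfolding D_def by (metis append_take_drop_id word_eval_append)
  also have "\<dots> = refl_seq r w l ** word_eval r (take l w) ** D"
    using refl_seq_mult_prefix[OF inv_w kl(2)] by simp
  also have "\<dots> = (refl_seq r w k ** word_eval r (take (Suc k) w)) ** B ** D"
    unfolding prefix_l eq by (simp add: matrix_mul_assoc)
  also have "\<dots> = word_eval r (take k w @ drop (Suc k) (take l w) @ drop (Suc l) w)"
    using refl_seq_mult_prefix_Suc[OF inv_w] kl by (simp add: B_def D_def word_eval_append matrix_mul_assoc)
  finally have "word_eval r (take k w @ drop (Suc k) (take l w) @ drop (Suc l) w) = word_eval r w" ..
  moreover have "set (take k w @ drop (Suc k) (take l w) @ drop (Suc l) w) \<subseteq> I"
    using w by (auto dest: in_set_takeD in_set_dropD)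
  ultimately have "length w \<le> length (take k w @ drop (Suc k) (take l w) @ drop (Suc l) w)"
    using mw unfolding minimal_word_def by blast
  then show False using kl by simp
qed

lemma minimal_word_occurrences_le_1:
  assumes "\<forall>i\<in>I. r i ** r i = mat 1" and "minimal_word I r w"
  shows "occurrences r w \<sigma> \<le> 1"
proof -
  have "k = l"
    if "k \<in> {k. k < length w \<and> refl_seq r w k = \<sigma>}" "l \<in> {k. k < length w \<and> refl_seq r w k = \<sigma>}"
    for k l
    using that minimal_word_refl_seq_distinct[OF assms] by (metis (mono_tags) mem_Collect_eq nat_neq_iff)
  then show ?thesis unfolding occurrences_def by (simp add: card_le_Suc0_iff_eq)
qed

lemma word_eval_in_group:
  assumes "reflection_group W" and "\<forall>i\<in>set w. r i \<in> W"
  shows "word_eval r w \<in> W"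
  using assms(2) reflection_groupD(2,3)[OF assms(1)] by (induction w) auto

lemma card_less_Suc_Collect:
  "card {k. k < Suc j \<and> P k} = card {k. k < j \<and> P k} + (if P j then 1 else 0)"
proof -
  have "{k. k < Suc j \<and> P k} = {k. k < j \<and> P k} \<union> (if P j then {j} else {})"
    by (auto simp: less_Suc_eq)
  then show ?thesis by (auto simp: card_insert_if)
qed

lemma refl_seq_side_parity:
  fixes \<sigma> :: "real^'n^'n"
  assumes W: "reflection_group W"
    and C: "connected C" "C \<subseteq> hyperplane_complement W" "x0 \<in> C"
    and walls: "\<forall>i\<in>I. r i \<in> W \<and> is_reflection (r i) \<and> is_wall_reflection C (r i)"
    and w: "set w \<subseteq> I"
    and \<sigma>: "\<sigma> \<in> W" "is_reflection \<sigma>" "reflection_along a v \<sigma>"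
  shows "j \<le> length w \<Longrightarrow> (a \<bullet> (word_eval r (take j w) *v x0) > 0 \<longleftrightarrow> a \<bullet> x0 > 0)
           \<longleftrightarrow> even (card {k. k < j \<and> refl_seq r w k = \<sigma>})"
proof (induction j)
  case 0
  then show ?case by simp
next
  case (Suc j)
  then have j: "j < length w" by simp
  define u where "u = word_eval r (take j w)"
  have u: "u \<in> W" unfolding u_def
    using word_eval_in_group[OF W] walls w by (meson in_set_takeD subsetD)
  have inv_w: "\<forall>i\<in>set w. r i ** r i = mat 1" using w walls is_reflection_involution by blast
  have letter: "r (w ! j) \<in> W" "is_reflection (r (w ! j))" "is_wall_reflection C (r (w ! j))"
    using walls w j nth_mem by blast+
  show ?case
  proof (cases "refl_seq r w j = \<sigma>")
    case True
    have "word_eval r (take (Suc j) w) = \<sigma> ** u"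
      using refl_seq_mult_prefix[OF inv_w j] True unfolding u_def by simp
    then have "a \<bullet> (word_eval r (take (Suc j) w) *v x0) = - (a \<bullet> (u *v x0))"
      using reflection_along_inner_apply[OF \<sigma>(3)] by (simp flip: matrix_vector_mul_assoc)
    moreover have "a \<bullet> (u *v x0) \<noteq> 0"
      using hyperplane_complement_functional_nonzero[OF _ \<sigma>] hyperplane_complement_invariant[OF W _ u] C
      by blast
    ultimately show ?thesis using Suc True unfolding card_less_Suc_Collect u_def by auto
  next
    case False
    then have "u ** r (w ! j) ** matrix_inv u \<noteq> \<sigma>" unfolding refl_seq_def u_def .
    then have "a \<bullet> (u *v x0) > 0 \<longleftrightarrow> a \<bullet> (word_eval r (take (Suc j) w) *v x0) > 0"
      unfolding word_eval_take_Suc[OF j] u_def[symmetric] by (rule wall_crossing_preserves_side[OF W C letter u \<sigma>])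
    then show ?thesis using Suc False unfolding card_less_Suc_Collect u_def by auto
  qed
qed

theorem proposition4p9:
  fixes W :: "(real^'n^'n) set" and I :: "'i set" and r :: "'i \<Rightarrow> real^'n^'n"
    and w :: "'i list" and \<sigma> :: "real^'n^'n"
  assumes "reflection_group W"
    and "simple_reflections W I r"
    and "minimal_word I r w"
    and "\<sigma> \<in> W" and "is_reflection \<sigma>"
    and "\<sigma> \<in> r ` I"
    and "is_reflection (word_eval r w)"
    and "word_eval r w ** \<sigma> = \<sigma> ** word_eval r w"
    and "word_eval r w \<noteq> \<sigma>"
  shows "occurrences r w \<sigma> = 0"
proof -
  obtain C where C: "is_chamber W C"
    and walls: "r ` I = {s\<in>W. is_reflection s \<and> is_wall_reflection C s}"
    using assms(2) unfolding simple_reflections_def by blast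
  then obtain x0 where x0: "x0 \<in> hyperplane_complement W"
    "C = connected_component_set (hyperplane_complement W) x0"
    unfolding is_chamber_def by blast
  then have C_props: "connected C" "C \<subseteq> hyperplane_complement W" "x0 \<in> C"
    by (auto simp: connected_component_subset connected_component_refl)
  obtain a v where \<sigma>: "reflection_along a v \<sigma>" using is_reflection_along[OF assms(5)] .
  have walls': "\<forall>i\<in>I. r i \<in> W \<and> is_reflection (r i) \<and> is_wall_reflection C (r i)"
    using walls by blast
  have w: "set w \<subseteq> I" using assms(3) unfolding minimal_word_def by blast
  have "a \<bullet> (word_eval r w *v x0) = a \<bullet> x0"
    using commuting_reflection_preserves_functional[OF \<sigma> assms(7-9)] .
  then have "even (occurrences r w \<sigma>)"
    using refl_seq_side_parity[OF assms(1) C_props walls' w assms(4,5) \<sigma>, of "length w"]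
    unfolding occurrences_def by simp
  moreover have "occurrences r w \<sigma> \<le> 1"
    using minimal_word_occurrences_le_1[OF _ assms(3)] walls' is_reflection_involution by blast
  ultimately show ?thesis by (cases "occurrences r w \<sigma>") auto
qed

end
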